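(* Let $n\in\mathbb{N}$. If $2\mid n$ then $K_{n/2,n/2}\subseteq K_{n,n}$. If $3\mid n$ then $K_{n/3,n/3}\subseteq K_{n,n}$.
   Context: Thompson's group $F$ is the group of piecewise linear homeomorphisms of $[0,1]$ with finitely many dyadic breakpoints and slopes integer powers of $2$. An element $h\in F$ has the pair of branches $u\rightarrow v$ (for finite binary words $u,v$) if $h(.u\alpha)=.v\alpha$ for every infinite binary word $\alpha$. For $H\le F$ write $u\sim_H v$ if some $h\in H$ has the pair of branches $u\rightarrow v$. The closure $\mathrm{Cl}(H)$ is the subgroup of all $f\in F$ for which there is a finite subdivision of $[0,1]$ into intervals on each of which $f$ coincides with some element of $H$; $H$ is closed if $H=\mathrm{Cl}(H)$ (intersections of closed subgroups are closed). For $p\in\mathbb{N}$, $K_{p,p}$ is the minimal closed subgroup $K$ of $F$ such that: (a) $0^k1\sim_K 0^{k+p}1$ for all $k\in\mathbb{N}$; (b) $1^k0\sim_K 1^{k+p}0$ for all $k\in\mathbb{N}$; (c) $0^k1\sim_K 1^{p+1-k}0$ for $1\le k\le p$; (d) $0^{2k}10\sim_K 1^{1+3(p-k)}0$ for $1\le k\le p$; (e) $0^{2k}11\sim_K 1^{2+3(p-k)}0$ for $1\le k\le p$; (f) $0^{2k-1}1\sim_K 1^{3(p-k+1)}0$ for $1\le k\le p$. *)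

theory Defs
  imports Complex_Main
begin

definition dyadic :: "real \<Rightarrow> bool" where
  "dyadic x \<longleftrightarrow> (\<exists>(a::int) (k::nat). x = of_int a / 2 ^ k)"

definition subdivision :: "real list \<Rightarrow> bool" where
  "subdivision xs \<longleftrightarrow> xs \<noteq> [] \<and> hd xs = 0 \<and> last xs = 1 \<and> sorted_wrt (<) xs"

definition thompsonF :: "(real \<Rightarrow> real) set" where
  "thompsonF = {f. (\<forall>x. x \<notin> {0..1} \<longrightarrow> f x = x) \<and> bij_betw f {0..1} {0..1} \<and>
     (\<exists>xs. subdivision xs \<and> (\<forall>x\<in>set xs. dyadic x) \<and>
        (\<forall>i < length xs - 1. \<exists>(k::int) (b::real).
            \<forall>x\<in>{xs!i..xs!Suc i}. f x = 2 powi k * x + b))}"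

definition subgroupF :: "(real \<Rightarrow> real) set \<Rightarrow> bool" where
  "subgroupF H \<longleftrightarrow> H \<subseteq> thompsonF \<and> id \<in> H \<and>
     (\<forall>f\<in>H. \<forall>g\<in>H. f \<circ> g \<in> H) \<and> (\<forall>f\<in>H. inv f \<in> H)"

definition ClF :: "(real \<Rightarrow> real) set \<Rightarrow> (real \<Rightarrow> real) set" where
  "ClF H = {f \<in> thompsonF. \<exists>xs. subdivision xs \<and>
     (\<forall>i < length xs - 1. \<exists>h\<in>H. \<forall>x\<in>{xs!i..xs!Suc i}. f x = h x)}"

definition closedF :: "(real \<Rightarrow> real) set \<Rightarrow> bool" where
  "closedF H \<longleftrightarrow> H = ClF H"

text \<open>Binary words: True = 1, False = 0.  Value .w of an infinite binary word,
  and concatenation u alpha of a finite word with an infinite one.\<close>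
definition binval :: "(nat \<Rightarrow> bool) \<Rightarrow> real" where
  "binval \<alpha> = (\<Sum>i. if \<alpha> i then 1 / 2 ^ Suc i else 0)"

definition wcat :: "bool list \<Rightarrow> (nat \<Rightarrow> bool) \<Rightarrow> nat \<Rightarrow> bool" where
  "wcat u \<alpha> = (\<lambda>i. if i < length u then u ! i else \<alpha> (i - length u))"

definition has_branch_pair :: "(real \<Rightarrow> real) \<Rightarrow> bool list \<Rightarrow> bool list \<Rightarrow> bool" where
  "has_branch_pair h u v \<longleftrightarrow> (\<forall>\<alpha>. h (binval (wcat u \<alpha>)) = binval (wcat v \<alpha>))"

definition simH :: "(real \<Rightarrow> real) set \<Rightarrow> bool list \<Rightarrow> bool list \<Rightarrow> bool" where
  "simH H u v \<longleftrightarrow> (\<exists>h\<in>H. has_branch_pair h u v)"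

abbreviation zeros :: "nat \<Rightarrow> bool list" where "zeros k \<equiv> replicate k False"
abbreviation ones :: "nat \<Rightarrow> bool list" where "ones k \<equiv> replicate k True"

text \<open>Conditions (a)-(f); here \<nat> = {1,2,...} (k = 0 in (a) would make the
  condition unsatisfiable).\<close>
definition Kconds :: "nat \<Rightarrow> (real \<Rightarrow> real) set \<Rightarrow> bool" where
  "Kconds p K \<longleftrightarrow>
     (\<forall>k\<ge>1. simH K (zeros k @ [True]) (zeros (k + p) @ [True])) \<and>
     (\<forall>k\<ge>1. simH K (ones k @ [False]) (ones (k + p) @ [False])) \<and>
     (\<forall>k. 1 \<le> k \<and> k \<le> p \<longrightarrow> simH K (zeros k @ [True]) (ones (p + 1 - k) @ [False])) \<and>
     (\<forall>k. 1 \<le> k \<and> k \<le> p \<longrightarrow> simH K (zeros (2*k) @ [True, False]) (ones (1 + 3*(p - k)) @ [False])) \<and>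
     (\<forall>k. 1 \<le> k \<and> k \<le> p \<longrightarrow> simH K (zeros (2*k) @ [True, True]) (ones (2 + 3*(p - k)) @ [False])) \<and>
     (\<forall>k. 1 \<le> k \<and> k \<le> p \<longrightarrow> simH K (zeros (2*k - 1) @ [True]) (ones (3*(p - k + 1)) @ [False]))"

definition Kpp :: "nat \<Rightarrow> (real \<Rightarrow> real) set" where
  "Kpp p = \<Inter>{K. subgroupF K \<and> closedF K \<and> Kconds p K}"

end

theory Submission
  imports Defs
begin

(* Conditions (a) and (b) say that the classes of the words 0^k 1 and 1^k 0 under ~_K are
   periodic in k with period p, and together with (c) this identifies 0^k 1 with 1^j 0 whenever
   p divides k + j - 1.  Transported along these periods, (d)-(f) give 0^(2k-1) 1 ~ 0^(3k-2) 1,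
   0^(2k) 10 ~ 0^(3k) 1 and 0^(2k) 11 ~ 0^(3k-1) 1 for every k >= 1.  Hence a period 2h of the
   family 0^k 1 yields the period 3h, and thus the period gcd(2h, 3h) = h; a period 3q yields
   the period 2q on odd lengths, which for odd q gives the period gcd(3q, 2q) = q, while even q
   is handled by halving and induction.  Once 0^k 1 has a period q dividing p, conditions
   (a)-(f) for q follow from those for p, so every closed subgroup satisfying the conditions
   for n = 2q or n = 3q satisfies them for q. *)

lemma thompsonF_inj:
  assumes "f \<in> thompsonF"
  shows "inj f"
proof (rule injI)
  fix x y assume eq: "f x = f y"
  have fix_out: "\<And>z. z \<notin> {0..1} \<Longrightarrow> f z = z" and bij: "bij_betw f {0..1::real} {0..1}"
    using assms unfolding thompsonF_def by auto
  have in_iff: "f z \<in> {0..1} \<longleftrightarrow> z \<in> {0..1}" for z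
  proof (cases "z \<in> {0..1}")
    case True
    then show ?thesis using bij_betw_apply[OF bij] by blast
  next
    case False
    then show ?thesis using fix_out by simp
  qed
  show "x = y"
  proof (cases "x \<in> {0..1}")
    case True
    then have "y \<in> {0..1}" using eq in_iff[of x] in_iff[of y] by metis
    with True show ?thesis using inj_onD[OF bij_betw_imp_inj_on[OF bij] eq] by blast
  next
    case False
    then have "y \<notin> {0..1}" using eq in_iff[of x] in_iff[of y] by metis
    with False show ?thesis using eq fix_out by simp
  qed
qed

lemma equivp_simH:
  assumes H: "subgroupF H"
  shows "equivp (simH H)"
proof (rule equivpI)
  show "reflp (simH H)"
  proof (rule reflpI)
    fix u
    have "id \<in> H" using H unfolding subgroupF_def by blast
    then show "simH H u u" unfolding simH_def has_branch_pair_def by (metis id_apply)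
  qed
  show "symp (simH H)"
  proof (rule sympI)
    fix u v assume "simH H u v"
    then obtain h where h: "h \<in> H" "has_branch_pair h u v" unfolding simH_def by blast
    have "inv h \<in> H" "h \<in> thompsonF" using H h(1) unfolding subgroupF_def by blast+
    then have "has_branch_pair (inv h) v u"
      using h(2) thompsonF_inj unfolding has_branch_pair_def by (metis inv_f_f)
    with \<open>inv h \<in> H\<close> show "simH H v u" unfolding simH_def by blast
  qed
  show "transp (simH H)"
  proof (rule transpI)
    fix u v w assume "simH H u v" "simH H v w"
    then obtain h g where h: "h \<in> H" "has_branch_pair h u v" and g: "g \<in> H" "has_branch_pair g v w"
      unfolding simH_def by blast
    have "g \<circ> h \<in> H" using H h(1) g(1) unfolding subgroupF_def by blast
    moreover have "has_branch_pair (g \<circ> h) u w"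
      using h(2) g(2) unfolding has_branch_pair_def by simp
    ultimately show "simH H u w" unfolding simH_def by blast
  qed
qed

lemma wcat_append: "wcat (u @ w) \<alpha> = wcat u (wcat w \<alpha>)"
  unfolding wcat_def by (auto simp: nth_append fun_eq_iff)

lemma simH_append: "simH H u v \<Longrightarrow> simH H (u @ w) (v @ w)"
  unfolding simH_def has_branch_pair_def by (metis wcat_append)

definition periodic :: "('a \<Rightarrow> 'a \<Rightarrow> bool) \<Rightarrow> (nat \<Rightarrow> 'a) \<Rightarrow> nat \<Rightarrow> bool" where
  "periodic R W m \<longleftrightarrow> (\<forall>a b. a mod m = b mod m \<longrightarrow> R (W a) (W b))"

lemma periodicD: "periodic R W m \<Longrightarrow> a mod m = b mod m \<Longrightarrow> R (W a) (W b)"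
  unfolding periodic_def by blast

lemma periodicI:
  assumes R: "equivp R" and shift: "\<And>a. R (W a) (W (a + m))"
  shows "periodic R W m"
proof -
  have shifts: "R (W a) (W (a + m * c))" for a c
  proof (induction c)
    case 0
    show ?case using equivp_reflp[OF R] by simp
  next
    case (Suc c)
    have "R (W (a + m * c)) (W (a + m * Suc c))" using shift[of "a + m * c"] by (simp add: ac_simps)
    with Suc.IH show ?case using equivp_transp[OF R] by blast
  qed
  show ?thesis
    unfolding periodic_def
    by (metis R equivp_symp equivp_transp nat_mod_eq_iff shifts)
qed

lemma periodic_dvd: "m dvd n \<Longrightarrow> periodic R W m \<Longrightarrow> periodic R W n"
  unfolding periodic_def by (metis mod_mod_cancel)

lemma periodic_gcd:
  assumes R: "equivp R" and m: "periodic R W m" and n: "periodic R W n"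
  shows "periodic R W (gcd m n)"
proof (cases "m = 0")
  case True
  then show ?thesis using n by simp
next
  case False
  then obtain x y where bezout: "m * x = n * y + gcd m n" using bezout_nat by blast
  show ?thesis
  proof (rule periodicI[OF R])
    fix a
    have "R (W a) (W (a + m * x))" using m by (rule periodicD) simp
    moreover have "R (W (a + gcd m n + n * y)) (W (a + gcd m n))" using n by (rule periodicD) simp
    ultimately show "R (W a) (W (a + gcd m n))"
      using bezout equivp_transp[OF R] by (metis add.assoc add.commute)
  qed
qed

text \<open>Indices are shifted by one, \<open>zeros_one a\<close> being the word 0^(a+1) 1 and \<open>ones_zero b\<close>
  the word 1^(b+1) 0, so that conditions (a)--(f) hold for all indices without a lower bound.\<close>

abbreviation zeros_one :: "nat \<Rightarrow> bool list" where
  "zeros_one a \<equiv> zeros (Suc a) @ [True]"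

abbreviation ones_zero :: "nat \<Rightarrow> bool list" where
  "ones_zero b \<equiv> ones (Suc b) @ [False]"

lemma all_ge_one_iff: "(\<forall>k\<ge>1. P k) \<longleftrightarrow> (\<forall>a. P (Suc a))"
  by (auto simp: Suc_le_eq gr0_conv_Suc)

lemma all_between_one_iff: "(\<forall>k. 1 \<le> k \<and> k \<le> p \<longrightarrow> P k) \<longleftrightarrow> (\<forall>a<p. P (Suc a))"
  by (auto simp: Suc_le_eq gr0_conv_Suc)

lemma Kconds_iff:
  "Kconds p K \<longleftrightarrow>
     (\<forall>a. simH K (zeros_one a) (zeros_one (a + p))) \<and>
     (\<forall>b. simH K (ones_zero b) (ones_zero (b + p))) \<and>
     (\<forall>a<p. simH K (zeros_one a) (ones_zero (p - 1 - a))) \<and>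
     (\<forall>a<p. simH K (zeros_one (2*a + 1) @ [False]) (ones_zero (3*(p - 1 - a)))) \<and>
     (\<forall>a<p. simH K (zeros_one (2*a + 1) @ [True]) (ones_zero (3*(p - 1 - a) + 1))) \<and>
     (\<forall>a<p. simH K (zeros_one (2*a)) (ones_zero (3*(p - 1 - a) + 2)))"
proof -
  have "p - a = Suc (p - 1 - a)" "3 * (p - a) = Suc (3 * (p - 1 - a) + 2)"
    "Suc (3 * (p - Suc a)) = 1 + 3 * (p - Suc a)" if "a < p" for a
    using that by auto
  then show ?thesis
    unfolding Kconds_def all_ge_one_iff all_between_one_iff
    by (simp add: numeral_eq_Suc cong: all_cong1 imp_cong)
qed

locale thompson_subgroup =
  fixes K :: "(real \<Rightarrow> real) set"
  assumes subgroup: "subgroupF K"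
begin

lemma equivp_sim: "equivp (simH K)"
  using subgroup by (rule equivp_simH)

lemma sim_sym: "simH K u v \<Longrightarrow> simH K v u"
  using equivp_sim by (rule equivp_symp)

lemma sim_trans [trans]: "simH K u v \<Longrightarrow> simH K v w \<Longrightarrow> simH K u w"
  using equivp_sim by (rule equivp_transp)

abbreviation period :: "nat \<Rightarrow> bool" where
  "period m \<equiv> periodic (simH K) zeros_one m"

end

locale scaling_relations = thompson_subgroup +
  assumes even_scaling: "simH K (zeros_one (2*k)) (zeros_one (3*k))"
    and odd_one_scaling: "simH K (zeros_one (2*k + 1) @ [True]) (zeros_one (3*k + 1))"
    and odd_zero_scaling: "simH K (zeros_one (2*k + 1) @ [False]) (zeros_one (3*k + 2))"
begin

lemma sim_even_iff:
  "simH K (zeros_one (2*k)) (zeros_one (2*l)) \<longleftrightarrow> simH K (zeros_one (3*k)) (zeros_one (3*l))"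
  by (meson even_scaling sim_sym sim_trans)

lemma sim_odd_imp:
  assumes sim: "simH K (zeros_one (2*k + 1)) (zeros_one (2*l + 1))" and r: "r \<in> {1, 2}"
  shows "simH K (zeros_one (3*k + r)) (zeros_one (3*l + r))"
proof -
  have scale: "simH K (zeros_one (2*j + 1) @ [r = 1]) (zeros_one (3*j + r))" for j
    using r odd_one_scaling[of j] odd_zero_scaling[of j] by (cases "r = 1") simp_all
  have "simH K (zeros_one (3*k + r)) (zeros_one (2*k + 1) @ [r = 1])" using scale by (rule sim_sym)
  also have "simH K \<dots> (zeros_one (2*l + 1) @ [r = 1])" using sim by (rule simH_append)
  also have "simH K \<dots> (zeros_one (3*l + r))" by (rule scale)
  finally show ?thesis .
qed

lemma period_triple_of_double:
  assumes double: "period (2*h)"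
  shows "period (3*h)"
proof (rule periodicI[OF equivp_sim])
  fix a :: nat
  have shift: "simH K (zeros_one c) (zeros_one (c + 2*h))" for c
    using double by (rule periodicD) simp
  define k where "k = a div 3"
  have "a = 3*k + a mod 3" "a mod 3 < 3" unfolding k_def by simp_all
  then consider "a = 3*k" | "a = 3*k + 1" | "a = 3*k + 2" by linarith
  then show "simH K (zeros_one a) (zeros_one (a + 3*h))"
  proof cases
    case 1
    have "simH K (zeros_one (2*k)) (zeros_one (2*(k + h)))"
      using shift[of "2*k"] by (simp add: distrib_left)
    then show ?thesis unfolding 1 sim_even_iff by (simp add: distrib_left)
  next
    case 2
    have "simH K (zeros_one (2*k + 1)) (zeros_one (2*(k + h) + 1))"
      using shift[of "2*k + 1"] by (simp add: distrib_left)
    then show ?thesis using sim_odd_imp[of k "k + h" 1] unfolding 2 by (simp add: distrib_left)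
  next
    case 3
    have "simH K (zeros_one (2*k + 1)) (zeros_one (2*(k + h) + 1))"
      using shift[of "2*k + 1"] by (simp add: distrib_left)
    then show ?thesis using sim_odd_imp[of k "k + h" 2] unfolding 3 by (simp add: distrib_left)
  qed
qed

lemma period_of_double:
  assumes double: "period (2*h)"
  shows "period h"
proof -
  have "period (gcd (2*h) (3*h))"
    using periodic_gcd[OF equivp_sim double period_triple_of_double[OF double]] .
  moreover have "gcd (2*h) (3*h) = h" by (simp add: gcd_mult_right)
  ultimately show ?thesis by simp
qed

lemma period_of_triple_odd:
  assumes triple: "period (3*q)" and "odd q"
  shows "period q"
proof -
  have shift: "simH K (zeros_one c) (zeros_one (c + 3*q))" for c
    using triple by (rule periodicD) simp
  have even_shift: "simH K (zeros_one (2*k)) (zeros_one (2*k + 2*q))" for k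
  proof -
    have "simH K (zeros_one (3*k)) (zeros_one (3*(k + q)))"
      using shift[of "3*k"] by (simp add: distrib_left)
    then show ?thesis unfolding sim_even_iff[symmetric] by (simp add: distrib_left)
  qed
  \<comment> \<open>For odd \<open>a\<close> the index \<open>a + 3*q\<close> is even, so the shifts of even indices reach all of them.\<close>
  have "period (2*q)"
  proof (rule periodicI[OF equivp_sim])
    fix a
    show "simH K (zeros_one a) (zeros_one (a + 2*q))"
    proof (cases "even a")
      case True
      then obtain k where "a = 2*k" by (blast elim: evenE)
      then show ?thesis using even_shift by simp
    next
      case False
      then have "even (a + 3*q)" using \<open>odd q\<close> by simp
      then obtain k where k: "a + 3*q = 2*k" by (blast elim: evenE)
      have "simH K (zeros_one a) (zeros_one (a + 3*q))" by (rule shift)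
      also have "simH K \<dots> (zeros_one (a + 3*q + 2*q))"
        unfolding k by (rule even_shift)
      also have "a + 3*q + 2*q = (a + 2*q) + 3*q" by simp
      also have "simH K (zeros_one \<dots>) (zeros_one (a + 2*q))"
        using triple by (rule periodicD) (simp only: mod_add_self2)
      finally show ?thesis .
    qed
  qed
  moreover have "gcd (3*q) (2*q) = q" by (simp add: gcd_mult_right)
  ultimately show ?thesis using periodic_gcd[OF equivp_sim triple] by metis
qed

lemma period_of_triple: "period (3*q) \<Longrightarrow> period q"
proof (induction q rule: less_induct)
  case (less q)
  show ?case
  proof (cases "odd q \<or> q = 0")
    case True
    then show ?thesis using less.prems period_of_triple_odd by auto
  next
    case False
    then obtain r where q: "q = 2*r" and "r < q" by (auto elim: evenE)
    have "period (2*(3*r))" using less.prems q by (simp add: ac_simps)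
    then have "period r" using less.IH[OF \<open>r < q\<close>] period_of_double by blast
    then show ?thesis using periodic_dvd[of r q] q by simp
  qed
qed

end

locale Kconds_subgroup = thompson_subgroup +
  fixes p :: nat
  assumes Kconds: "Kconds p K" and p_pos: "0 < p"
begin

lemma zeros_one_period: "period p"
  by (rule periodicI[OF equivp_sim]) (use Kconds in \<open>unfold Kconds_iff, blast\<close>)

lemma ones_zero_period: "periodic (simH K) ones_zero p"
  by (rule periodicI[OF equivp_sim]) (use Kconds in \<open>unfold Kconds_iff, blast\<close>)

lemma zeros_one_sim_ones_zero:
  assumes "p dvd a + b + 1"
  shows "simH K (zeros_one a) (ones_zero b)"
proof -
  define r s where "r = a mod p" and "s = b mod p"
  have "r < p" "s < p" using p_pos by (simp_all add: r_def s_def)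
  have "a + b + 1 = p * (a div p) + p * (b div p) + (r + s + 1)"
    using mult_div_mod_eq[of p a] mult_div_mod_eq[of p b] unfolding r_def s_def by linarith
  moreover have "p dvd p * (a div p) + p * (b div p)" by simp
  ultimately have "p dvd r + s + 1" using assms by (simp only: dvd_add_right_iff)
  then obtain c where c: "r + s + 1 = p * c" by blast
  have "p * c < p * 2" using c \<open>r < p\<close> \<open>s < p\<close> by linarith
  then have "c = 1" using c by (cases c) auto
  with c have s: "s = p - 1 - r" by simp
  have "simH K (zeros_one a) (zeros_one r)" using zeros_one_period by (rule periodicD) (simp add: r_def)
  also have "simH K \<dots> (ones_zero s)" using Kconds \<open>r < p\<close> unfolding Kconds_iff s by blast
  also have "simH K \<dots> (ones_zero b)" using ones_zero_period by (rule periodicD) (simp add: s_def)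
  finally show ?thesis .
qed

sublocale scaling_relations K
proof
  fix k
  define r where "r = k mod p"
  have "r < p" using p_pos by (simp add: r_def)
  have residue: "simH K (zeros_one (c * k + d)) (zeros_one (c * r + d))" for c d
  proof (rule periodicD[OF zeros_one_period])
    have "(c * k + d) mod p = ((c * k) mod p + d) mod p" by (simp only: mod_add_left_eq)
    also have "\<dots> = ((c * r) mod p + d) mod p" by (simp only: r_def mod_mult_right_eq)
    also have "\<dots> = (c * r + d) mod p" by (simp only: mod_add_left_eq)
    finally show "(c * k + d) mod p = (c * r + d) mod p" .
  qed
  have "simH K (zeros_one (2*k)) (zeros_one (2*r))" using residue[of 2 0] by simp
  also have "simH K \<dots> (ones_zero (3*(p - 1 - r) + 2))"
    using Kconds \<open>r < p\<close> unfolding Kconds_iff by blast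
  also have "simH K \<dots> (zeros_one (3*r))"
    by (rule sim_sym, rule zeros_one_sim_ones_zero, rule dvdI[where k = 3]) (use \<open>r < p\<close> in linarith)
  also have "simH K \<dots> (zeros_one (3*k))" using residue[of 3 0] by (simp add: sim_sym)
  finally show "simH K (zeros_one (2*k)) (zeros_one (3*k))" .

  have "simH K (zeros_one (2*k + 1) @ [True]) (zeros_one (2*r + 1) @ [True])"
    using residue[of 2 1] by (rule simH_append)
  also have "simH K \<dots> (ones_zero (3*(p - 1 - r) + 1))"
    using Kconds \<open>r < p\<close> unfolding Kconds_iff by blast
  also have "simH K \<dots> (zeros_one (3*r + 1))"
    by (rule sim_sym, rule zeros_one_sim_ones_zero, rule dvdI[where k = 3]) (use \<open>r < p\<close> in linarith)
  also have "simH K \<dots> (zeros_one (3*k + 1))" using residue[of 3 1] by (rule sim_sym)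
  finally show "simH K (zeros_one (2*k + 1) @ [True]) (zeros_one (3*k + 1))" .

  have "simH K (zeros_one (2*k + 1) @ [False]) (zeros_one (2*r + 1) @ [False])"
    using residue[of 2 1] by (rule simH_append)
  also have "simH K \<dots> (ones_zero (3*(p - 1 - r)))"
    using Kconds \<open>r < p\<close> unfolding Kconds_iff by blast
  also have "simH K \<dots> (zeros_one (3*r + 2))"
    by (rule sim_sym, rule zeros_one_sim_ones_zero, rule dvdI[where k = 3]) (use \<open>r < p\<close> in linarith)
  also have "simH K \<dots> (zeros_one (3*k + 2))" using residue[of 3 2] by (rule sim_sym)
  finally show "simH K (zeros_one (2*k + 1) @ [False]) (zeros_one (3*k + 2))" .
qed

lemma Kconds_of_period:
  assumes "q dvd p" and "0 < q" and q_period: "period q"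
  shows "Kconds q K"
proof -
  have sim_q: "simH K (zeros_one a) (ones_zero b)" if "q dvd a + b + 1" for a b
  proof -
    obtain c where c: "a + b + 1 = q * c" using \<open>q dvd a + b + 1\<close> by blast
    \<comment> \<open>\<open>a'\<close> is congruent to \<open>a\<close> modulo \<open>q\<close>, and \<open>a' + b + 1 = p * (a + b + 1)\<close>.\<close>
    define a' where "a' = a + (p - 1) * (a + b + 1)"
    have a': "a' = a + q * ((p - 1) * c)" unfolding a'_def c by (simp add: ac_simps)
    have "simH K (zeros_one a) (zeros_one a')" by (rule periodicD[OF q_period]) (simp add: a')
    also have "simH K \<dots> (ones_zero b)"
    proof (rule zeros_one_sim_ones_zero, rule dvdI)
      have "(p - 1) * (a + b + 1) + (a + b + 1) = p * (a + b + 1)" using p_pos by (cases p) simp_all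
      then show "a' + b + 1 = p * (a + b + 1)" unfolding a'_def by linarith
    qed
    finally show ?thesis .
  qed
  have dvd_q: "q dvd x" if "x = q * k" for x k using that by simp
  show ?thesis
    unfolding Kconds_iff
  proof (intro conjI allI impI)
    fix a
    show "simH K (zeros_one a) (zeros_one (a + q))" using q_period by (rule periodicD) simp
  next
    fix b
    define x where "x = (q - 1) * (b + 1)"
    have "x + (b + 1) = q * (b + 1)" using \<open>0 < q\<close> unfolding x_def by (cases q) simp_all
    then have "x + b + 1 = q * (b + 1)" and "x + (b + q) + 1 = q * (b + 2)" by simp_all
    then have "simH K (zeros_one x) (ones_zero b)" and "simH K (zeros_one x) (ones_zero (b + q))"
      using sim_q[OF dvd_q] by blast+
    then show "simH K (ones_zero b) (ones_zero (b + q))" by (rule sim_trans[OF sim_sym])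
  next
    fix a assume "a < q"
    then show "simH K (zeros_one a) (ones_zero (q - 1 - a))"
      by (intro sim_q dvd_q[where k = 1]) linarith
  next
    fix a assume "a < q"
    have "simH K (zeros_one (2*a + 1) @ [False]) (zeros_one (3*a + 2))" by (rule odd_zero_scaling)
    also have "simH K \<dots> (ones_zero (3*(q - 1 - a)))"
      by (intro sim_q dvd_q[where k = 3]) (use \<open>a < q\<close> in linarith)
    finally show "simH K (zeros_one (2*a + 1) @ [False]) (ones_zero (3*(q - 1 - a)))" .
  next
    fix a assume "a < q"
    have "simH K (zeros_one (2*a + 1) @ [True]) (zeros_one (3*a + 1))" by (rule odd_one_scaling)
    also have "simH K \<dots> (ones_zero (3*(q - 1 - a) + 1))"
      by (intro sim_q dvd_q[where k = 3]) (use \<open>a < q\<close> in linarith)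
    finally show "simH K (zeros_one (2*a + 1) @ [True]) (ones_zero (3*(q - 1 - a) + 1))" .
  next
    fix a assume "a < q"
    have "simH K (zeros_one (2*a)) (zeros_one (3*a))" by (rule even_scaling)
    also have "simH K \<dots> (ones_zero (3*(q - 1 - a) + 2))"
      by (intro sim_q dvd_q[where k = 3]) (use \<open>a < q\<close> in linarith)
    finally show "simH K (zeros_one (2*a)) (ones_zero (3*(q - 1 - a) + 2))" .
  qed
qed

end

lemma Kpp_subset_Kpp_mult:
  assumes "0 < d"
    and descend: "\<And>K. scaling_relations K \<Longrightarrow>
      periodic (simH K) zeros_one (d * q) \<Longrightarrow> periodic (simH K) zeros_one q"
  shows "Kpp q \<subseteq> Kpp (d * q)"
proof (cases "q = 0")
  case True
  then show ?thesis by simp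
next
  case False
  have "Kconds q K" if "subgroupF K" "Kconds (d * q) K" for K
  proof -
    interpret Kconds_subgroup K "d * q"
      using that assms(1) False by unfold_locales simp_all
    show ?thesis
      using Kconds_of_period descend[OF scaling_relations_axioms zeros_one_period] False by simp
  qed
  then show ?thesis unfolding Kpp_def by (intro Inter_anti_mono) blast
qed

theorem lemma3p5:
  fixes n :: nat
  shows "(2 dvd n \<longrightarrow> Kpp (n div 2) \<subseteq> Kpp n) \<and> (3 dvd n \<longrightarrow> Kpp (n div 3) \<subseteq> Kpp n)"
proof (intro conjI impI)
  assume "2 dvd n"
  then obtain q where "n = 2 * q" by blast
  then show "Kpp (n div 2) \<subseteq> Kpp n"
    using Kpp_subset_Kpp_mult[of 2 q] scaling_relations.period_of_double by simp
next
  assume "3 dvd n"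
  then obtain q where "n = 3 * q" by blast
  then show "Kpp (n div 3) \<subseteq> Kpp n"
    using Kpp_subset_Kpp_mult[of 3 q] scaling_relations.period_of_triple by simp
qed

end
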